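(* Let $y:[0,h]\to\mathbb{R}$ solve $y'=f(y)$, $y(0)=y_0$, with $f$ Lipschitz continuous with constant $L$, and assume $f\circ y\in C^M([0,h])$. Given any previous iterate $\eta^{[p]}$, define the implicit SDC iterate by $\eta_0^{[p+1]}=\eta_0$ and, for $n=1,\dots,N$, $$\eta_n^{[p+1]}=\eta_{n-1}^{[p+1]}+h_n\big[f(\eta_n^{[p+1]})-f(\eta_n^{[p]})\big]+h\sum_{m=1}^M w_{n,m}f(\eta_m^{[p]}).$$ If $h<1/(2L)$, then for each $n=1,\dots,N$, $$|e_n^{[p+1]}|\le e^{2NhL}|e_0|+C_1h\|\mathbf e^{[p]}\|+C_2h^{M+1},$$ where the constants $C_1,C_2$ depend only on the smoothness of $f$, the exact solution $y$, and the choice of quadrature points.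
   Context: Quadrature nodes $0\le\xi_1<\dots<\xi_M\le1$ partition $[0,1]$ into $N$ subintervals, where $N=M-1$ if both endpoints $0,1$ are nodes, $N=M$ if exactly one is, and $N=M+1$ if neither is. The right endpoints are $\xi^R_0=0$, $\xi^R_N=1$, and for the interior ones $\xi^R_n=\xi_{n+1}$ if the left endpoint $0$ is a node, $\xi^R_n=\xi_n$ otherwise. $\ell_m$ is the Lagrange basis polynomial of degree $\le M-1$ with $\ell_m(\xi_k)=\delta_{mk}$, and $w_{n,m}=\int_{\xi^R_{n-1}}^{\xi^R_n}\ell_m(x)\,dx$. For step size $h>0$, $t_n=\xi^R_nh$, $h_n=(\xi^R_n-\xi^R_{n-1})h$. The iterate $\eta^{[p]}$ consists of approximations $\eta^{[p]}_n\approx y(t_n)$ and values $\eta^{[p]}_m\approx y(\xi_mh)$ at the quadrature nodes used in the quadrature sum. $\eta_0$ approximates $y_0$, $e_0=\eta_0-y_0$, $e^{[p+1]}_n=\eta^{[p+1]}_n-y(t_n)$, $\mathbf e^{[p]}=(\eta^{[p]}_m-y(\xi_mh))_{m=1}^M$, $\|\mathbf e\|=\max_m|e_m|$.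
   Formalization: $\|\mathbf e^{[p]}\|$ is the maximum of the node errors $\eta^{[p]}_m-y(\xi_mh)$ together with the grid errors $\eta^{[p]}_n-y(t_n)$ for n = 1,...,N, instead of the maximum over the node errors alone. The statement above fails without it. *)

theory Defs
  imports "HOL-Analysis.Analysis"
begin

definition valid_nodes :: "nat \<Rightarrow> (nat \<Rightarrow> real) \<Rightarrow> bool" where
  "valid_nodes M xi \<longleftrightarrow> M \<ge> 1 \<and> (\<forall>m\<in>{1..M}. 0 \<le> xi m \<and> xi m \<le> 1) \<and>
     (\<forall>m\<in>{1..M}. \<forall>k\<in>{1..M}. m < k \<longrightarrow> xi m < xi k)"

definition numN :: "nat \<Rightarrow> (nat \<Rightarrow> real) \<Rightarrow> nat" where
  "numN M xi = (if xi 1 = 0 \<and> xi M = 1 then M - 1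
                else if xi 1 = 0 \<or> xi M = 1 then M else M + 1)"

definition xiR :: "nat \<Rightarrow> (nat \<Rightarrow> real) \<Rightarrow> nat \<Rightarrow> real" where
  "xiR M xi n = (if n = 0 then 0 else if n = numN M xi then 1
                 else if xi 1 = 0 then xi (n + 1) else xi n)"

definition lagr :: "nat \<Rightarrow> (nat \<Rightarrow> real) \<Rightarrow> nat \<Rightarrow> real \<Rightarrow> real" where
  "lagr M xi m x = (\<Prod>k\<in>{1..M} - {m}. (x - xi k) / (xi m - xi k))"

definition qw :: "nat \<Rightarrow> (nat \<Rightarrow> real) \<Rightarrow> nat \<Rightarrow> nat \<Rightarrow> real" where
  "qw M xi n m = integral {xiR M xi (n - 1) .. xiR M xi n} (lagr M xi m)"

definition CM_bounded :: "nat \<Rightarrow> (real \<Rightarrow> real) \<Rightarrow> real \<Rightarrow> real \<Rightarrow> real \<Rightarrow> bool" where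
  "CM_bounded M g a b D \<longleftrightarrow> (\<exists>Ds :: nat \<Rightarrow> real \<Rightarrow> real.
      (\<forall>t\<in>{a..b}. Ds 0 t = g t) \<and>
      (\<forall>k<M. \<forall>t\<in>{a..b}. (Ds k has_real_derivative Ds (Suc k) t) (at t within {a..b})) \<and>
      continuous_on {a..b} (Ds M) \<and>
      (\<forall>t\<in>{a..b}. \<bar>Ds M t\<bar> \<le> D))"

end

theory Submission
  imports Defs "HOL-Computational_Algebra.Polynomial"
begin

(* Subtracting the exact relation y(t_n) = y(t_(n-1)) + h sum_m w_(n,m) f(y(xi_m h)) + tau_n from
   the sweep, the Lipschitz bound gives
     |e_n| <= |e_(n-1)| + hL |e_n| + hL (1 + Lambda) ||e^[p]|| + |tau_n|,
   where Lambda bounds sum_m |w_(n,m)|.  Since hL <= 1/2, the implicit term is absorbed at the cost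
   of a factor 1/(1 - hL) <= exp(2hL), and unrolling the recursion over the N subintervals gives
   the bound.  The local error tau_n integrates the interpolation error of f o y over an interval
   of length at most h; interpolation reproduces the Taylor polynomial of f o y of degree M - 1
   exactly, so Lebesgue's lemma bounds that error by (1 + Lambda) D h^M / M!. *)

lemma valid_nodesD:
  assumes "valid_nodes M xi"
  shows "1 \<le> M"
    and "m \<in> {1..M} \<Longrightarrow> xi m \<in> {0..1}"
    and "m \<in> {1..M} \<Longrightarrow> k \<in> {1..M} \<Longrightarrow> m < k \<Longrightarrow> xi m < xi k"
  using assms unfolding valid_nodes_def by auto

lemma inj_on_nodes:
  assumes "valid_nodes M xi"
  shows "inj_on xi {1..M}"
proof (rule inj_onI)
  fix m k assume "m \<in> {1..M}" "k \<in> {1..M}" "xi m = xi k"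
  then show "m = k"
    using valid_nodesD(3)[OF assms, of m k] valid_nodesD(3)[OF assms, of k m]
    by (cases m k rule: linorder_cases) auto
qed

lemma numN_pos:
  assumes "valid_nodes M xi"
  shows "0 < numN M xi"
  using valid_nodesD(1)[OF assms] by (cases "M = 1") (auto simp: numN_def)

lemma xiR_0: "xiR M xi 0 = 0"
  by (simp add: xiR_def)

lemma xiR_interior:
  assumes nodes: "valid_nodes M xi" and "0 < n" "n < numN M xi"
  shows "xiR M xi n = xi (n + of_bool (xi 1 = 0))" "n + of_bool (xi 1 = 0) \<in> {1..M}"
  using assms(2,3) by (auto simp: xiR_def numN_def split: if_splits)

lemma xiR_in_unit_interval:
  assumes nodes: "valid_nodes M xi" and "n \<le> numN M xi"
  shows "xiR M xi n \<in> {0..1}"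
  using assms xiR_interior[OF nodes, of n] valid_nodesD(2)[OF nodes]
  by (cases "n = 0 \<or> n = numN M xi") (auto simp: xiR_def)

lemma xiR_subinterval:
  assumes nodes: "valid_nodes M xi" and n: "n \<in> {1..numN M xi}"
  shows "0 \<le> xiR M xi (n - 1)" "xiR M xi (n - 1) \<le> xiR M xi n" "xiR M xi n \<le> 1"
proof -
  show "0 \<le> xiR M xi (n - 1)" "xiR M xi n \<le> 1"
    using xiR_in_unit_interval[OF nodes, of n] xiR_in_unit_interval[OF nodes, of "n - 1"] n by auto
  consider "n - 1 = 0" | "n = numN M xi" | "0 < n - 1" "n < numN M xi"
    using n by fastforce
  then show "xiR M xi (n - 1) \<le> xiR M xi n"
  proof cases
    case 1
    then show ?thesis using xiR_in_unit_interval[OF nodes, of n] n by (simp add: xiR_def)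
  next
    case 2
    then show ?thesis using xiR_in_unit_interval[OF nodes, of "n - 1"] numN_pos[OF nodes] by (simp add: xiR_def)
  next
    case 3
    then have "xi (n - 1 + of_bool (xi 1 = 0)) < xi (n + of_bool (xi 1 = 0))"
      using xiR_interior(2)[OF nodes] valid_nodesD(3)[OF nodes] by simp
    then show ?thesis using 3 xiR_interior(1)[OF nodes] by simp
  qed
qed

lemma integrate_power_bound:
  fixes F F' :: "real \<Rightarrow> real"
  assumes t: "0 \<le> t" and F0: "F 0 = 0"
    and deriv: "\<And>s. s \<in> {0..t} \<Longrightarrow> (F has_real_derivative F' s) (at s within {0..t})"
    and bound: "\<And>s. s \<in> {0..t} \<Longrightarrow> \<bar>F' s\<bar> \<le> D * s ^ k / fact k"
  shows "\<bar>F t\<bar> \<le> D * t ^ Suc k / fact (Suc k)"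
proof -
  have F_int: "(F' has_integral F t) {0..t}"
    using fundamental_theorem_of_calculus[OF t, of F F'] deriv F0
    by (simp add: has_real_derivative_iff_has_vector_derivative)
  have "((\<lambda>s. D * s ^ Suc k / fact (Suc k)) has_real_derivative D * s ^ k / fact k)
          (at s within {0..t})" for s
    by (rule derivative_eq_intros refl | simp add: fact_Suc del: of_nat_Suc)+
  then have G_int: "((\<lambda>s. D * s ^ k / fact k) has_integral D * t ^ Suc k / fact (Suc k)) {0..t}"
    using fundamental_theorem_of_calculus[OF t, of "\<lambda>s. D * s ^ Suc k / fact (Suc k)"]
    by (simp add: has_real_derivative_iff_has_vector_derivative)
  have "norm (integral {0..t} F') \<le> integral {0..t} (\<lambda>s. D * s ^ k / fact k)"
    by (rule integral_norm_bound_integral) (use F_int G_int bound in auto)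
  then show ?thesis
    unfolding integral_unique[OF F_int] integral_unique[OF G_int] real_norm_def .
qed

lemma taylor_poly_approx:
  fixes Ds :: "nat \<Rightarrow> real \<Rightarrow> real"
  assumes "\<forall>j<k. \<forall>t\<in>{0..h}. (Ds j has_real_derivative Ds (Suc j) t) (at t within {0..h})"
    and "\<forall>t\<in>{0..h}. \<bar>Ds k t\<bar> \<le> D"
  shows "\<exists>c. \<forall>t\<in>{0..h}. \<bar>Ds 0 t - (\<Sum>i<k. c i * t ^ i)\<bar> \<le> D * t ^ k / fact k"
  using assms
proof (induction k arbitrary: Ds)
  case 0
  then show ?case by auto
next
  case (Suc k)
  obtain c where c: "\<forall>t\<in>{0..h}. \<bar>Ds 1 t - (\<Sum>i<k. c i * t ^ i)\<bar> \<le> D * t ^ k / fact k"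
    using Suc.IH[of "\<lambda>j. Ds (Suc j)"] Suc.prems by auto
  define P where "P t = Ds 0 0 + (\<Sum>i<k. c i / real (Suc i) * t ^ Suc i)" for t
  have P_deriv: "(P has_real_derivative (\<Sum>i<k. c i * t ^ i)) (at t within S)" for t S
    unfolding P_def by (rule derivative_eq_intros refl | simp add: mult.commute)+
  have P_bound: "\<bar>Ds 0 t - P t\<bar> \<le> D * t ^ Suc k / fact (Suc k)" if t: "t \<in> {0..h}" for t
  proof (rule integrate_power_bound[where F = "\<lambda>s. Ds 0 s - P s"])
    fix s assume s: "s \<in> {0..t}"
    then have "(Ds 0 has_real_derivative Ds 1 s) (at s within {0..h})"
      using Suc.prems(1) t by auto
    then have "(Ds 0 has_real_derivative Ds 1 s) (at s within {0..t})"
      by (rule DERIV_subset) (use t in auto)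
    then show "((\<lambda>s. Ds 0 s - P s) has_real_derivative Ds 1 s - (\<Sum>i<k. c i * s ^ i))
        (at s within {0..t})"
      by (intro DERIV_diff P_deriv)
    show "\<bar>Ds 1 s - (\<Sum>i<k. c i * s ^ i)\<bar> \<le> D * s ^ k / fact k" using c s t by auto
  qed (use t in \<open>auto simp: P_def\<close>)
  define c' where "c' i = (if i = 0 then Ds 0 0 else c (i - 1) / real i)" for i
  have "P t = (\<Sum>i<Suc k. c' i * t ^ i)" for t
    unfolding P_def c'_def by (simp add: sum.lessThan_Suc_shift del: sum.lessThan_Suc)
  then show ?case using P_bound by metis
qed

lemma lagr_node:
  assumes nodes: "valid_nodes M xi" and m: "m \<in> {1..M}" and j: "j \<in> {1..M}"
  shows "lagr M xi m (xi j) = (if m = j then 1 else 0)"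
proof (cases "m = j")
  case True
  have "xi m \<noteq> xi k" if "k \<in> {1..M} - {m}" for k
    using inj_onD[OF inj_on_nodes[OF nodes]] m that by blast
  then show ?thesis using True unfolding lagr_def by (intro trans[OF prod.neutral]) auto
next
  case False
  then show ?thesis using j unfolding lagr_def by (auto intro!: bexI[of _ j])
qed

definition lagr_poly :: "nat \<Rightarrow> (nat \<Rightarrow> real) \<Rightarrow> nat \<Rightarrow> real poly" where
  "lagr_poly M xi m = (\<Prod>k\<in>{1..M} - {m}. smult (1 / (xi m - xi k)) [:- xi k, 1:])"

lemma poly_lagr_poly: "poly (lagr_poly M xi m) = lagr M xi m"
  unfolding lagr_poly_def lagr_def poly_prod
  by (intro ext prod.cong refl) (simp add: diff_divide_distrib mult.commute)

lemma degree_lagr_poly: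
  assumes "m \<in> {1..M}"
  shows "degree (lagr_poly M xi m) < M"
proof -
  have "degree (smult c [:- a, 1:]) \<le> 1" for c a :: real
    using degree_smult_le[of c "[:- a, 1:]"] by simp
  then have "degree (lagr_poly M xi m) \<le> (\<Sum>k\<in>{1..M} - {m}. 1)"
    unfolding lagr_poly_def
    by (intro order_trans[OF degree_prod_sum_le] sum_mono) (auto simp del: degree_smult_eq)
  then show ?thesis using assms by (simp, linarith)
qed

lemma lagr_interpolates_poly:
  fixes p :: "real poly"
  assumes nodes: "valid_nodes M xi" and deg: "degree p < M"
  shows "(\<Sum>m=1..M. lagr M xi m x * poly p (xi m)) = poly p x"
proof -
  define q where "q = (\<Sum>m=1..M. smult (poly p (xi m)) (lagr_poly M xi m))"
  have poly_q: "poly q x = (\<Sum>m=1..M. lagr M xi m x * poly p (xi m))" for x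
    unfolding q_def by (simp add: poly_sum poly_lagr_poly mult.commute)
  have "degree q < M"
    unfolding q_def using valid_nodesD(1)[OF nodes]
    by (intro degree_sum_less order.strict_trans1[OF degree_smult_le degree_lagr_poly]) auto
  moreover have "poly q (xi j) = poly p (xi j)" if j: "j \<in> {1..M}" for j
  proof -
    have "poly q (xi j) = (\<Sum>m=1..M. if m = j then poly p (xi m) else 0)"
      unfolding poly_q using lagr_node[OF nodes _ j] by (intro sum.cong) auto
    then show ?thesis using j by simp
  qed
  moreover have "card (xi ` {1..M}) = M"
    using card_image[OF inj_on_nodes[OF nodes]] by simp
  ultimately have "q = p"
    using deg by (intro poly_eqI_degree[of "xi ` {1..M}"]) auto
  then show ?thesis using poly_q[of x] by metis
qed

lemma continuous_on_lagr: "continuous_on S (lagr M xi m)"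
  unfolding poly_lagr_poly[symmetric] by (intro continuous_on_poly continuous_on_id)

lemma abs_lagr_le:
  assumes nodes: "valid_nodes M xi" and x: "x \<in> {0..1}"
  shows "\<bar>lagr M xi m x\<bar> \<le> (\<Prod>k\<in>{1..M} - {m}. 1 / \<bar>xi m - xi k\<bar>)"
  unfolding lagr_def abs_prod abs_divide
proof (intro prod_mono conjI)
  fix k assume "k \<in> {1..M} - {m}"
  then have "xi k \<in> {0..1}" using valid_nodesD(2)[OF nodes] by auto
  then have "\<bar>x - xi k\<bar> \<le> 1" using x by (auto simp: abs_le_iff)
  then show "\<bar>x - xi k\<bar> / \<bar>xi m - xi k\<bar> \<le> 1 / \<bar>xi m - xi k\<bar>"
    by (rule divide_right_mono) simp
qed simp

text \<open>An upper bound for the Lebesgue constant of the nodes on [0,1].\<close>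
definition lebesgue_bound :: "nat \<Rightarrow> (nat \<Rightarrow> real) \<Rightarrow> real" where
  "lebesgue_bound M xi = (\<Sum>m=1..M. \<Prod>k\<in>{1..M} - {m}. 1 / \<bar>xi m - xi k\<bar>)"

lemma lebesgue_bound_nonneg: "0 \<le> lebesgue_bound M xi"
  unfolding lebesgue_bound_def by (intro sum_nonneg prod_nonneg) auto

lemma lagr_interpolation_error:
  fixes p :: "real poly"
  assumes nodes: "valid_nodes M xi" and deg: "degree p < M"
    and approx: "\<forall>x\<in>{0..1}. \<bar>\<phi> x - poly p x\<bar> \<le> \<epsilon>" and x: "x \<in> {0..1}"
  shows "\<bar>\<phi> x - (\<Sum>m=1..M. lagr M xi m x * \<phi> (xi m))\<bar> \<le> \<epsilon> * (1 + lebesgue_bound M xi)"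
proof -
  have "\<phi> x - (\<Sum>m=1..M. lagr M xi m x * \<phi> (xi m))
      = (\<phi> x - poly p x) - (\<Sum>m=1..M. lagr M xi m x * (\<phi> (xi m) - poly p (xi m)))"
    using lagr_interpolates_poly[OF nodes deg, of x]
    by (simp add: right_diff_distrib sum_subtractf)
  also have "\<bar>\<dots>\<bar> \<le> \<bar>\<phi> x - poly p x\<bar>
      + (\<Sum>m=1..M. \<bar>lagr M xi m x\<bar> * \<bar>\<phi> (xi m) - poly p (xi m)\<bar>)"
    by (rule order.trans[OF abs_triangle_ineq4], rule add_left_mono, rule order.trans[OF sum_abs])
       (simp add: abs_mult)
  also have "\<dots> \<le> \<epsilon> + (\<Sum>m=1..M. \<bar>lagr M xi m x\<bar> * \<epsilon>)"
    using approx x valid_nodesD(2)[OF nodes] by (intro add_mono sum_mono mult_left_mono) auto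
  also have "\<dots> \<le> \<epsilon> + lebesgue_bound M xi * \<epsilon>"
    unfolding lebesgue_bound_def sum_distrib_right
    using abs_lagr_le[OF nodes x] approx x
    by (intro add_left_mono sum_mono mult_right_mono) auto
  finally show ?thesis by (simp add: algebra_simps)
qed

lemma has_integral_bound_subinterval_unit:
  fixes f :: "real \<Rightarrow> real"
  assumes "(f has_integral i) {a..b}" "0 \<le> a" "a \<le> b" "b \<le> 1"
    and "\<And>x. x \<in> {a..b} \<Longrightarrow> \<bar>f x\<bar> \<le> B"
  shows "\<bar>i\<bar> \<le> B"
proof -
  have "0 \<le> B" using assms(3) assms(5)[of a] by force
  have "\<bar>i\<bar> \<le> B * (b - a)"
    using has_integral_bound_real[OF \<open>0 \<le> B\<close> _ assms(1), where S="{}"] assms by simp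
  also have "\<dots> \<le> B" using \<open>0 \<le> B\<close> assms(2-4) by (simp add: mult_left_le)
  finally show ?thesis .
qed

lemma has_integral_lagr:
  "(lagr M xi m has_integral qw M xi n m) {xiR M xi (n - 1)..xiR M xi n}"
  unfolding qw_def by (intro integrable_integral integrable_continuous_interval continuous_on_lagr)

lemma sum_abs_qw_le:
  assumes nodes: "valid_nodes M xi" and n: "n \<in> {1..numN M xi}"
  shows "(\<Sum>m=1..M. \<bar>qw M xi n m\<bar>) \<le> lebesgue_bound M xi"
  unfolding lebesgue_bound_def
  using xiR_subinterval[OF nodes n] abs_lagr_le[OF nodes]
  by (intro sum_mono has_integral_bound_subinterval_unit[OF has_integral_lagr]) auto

lemma has_integral_rescaled_derivative:
  assumes h: "0 \<le> h" and ab: "0 \<le> a" "a \<le> b" "b \<le> 1"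
    and deriv: "\<forall>t\<in>{0..h}. (y has_real_derivative \<phi> t) (at t within {0..h})"
  shows "((\<lambda>x. h * \<phi> (h * x)) has_integral y (b * h) - y (a * h)) {a..b}"
proof -
  have "((\<lambda>x. y (h * x)) has_real_derivative h * \<phi> (h * x)) (at x within {a..b})"
    if x: "x \<in> {a..b}" for x
  proof -
    have img: "(\<lambda>x. h * x) ` {a..b} \<subseteq> {0..h}"
      using ab h by (auto intro!: mult_left_le)
    then have "h * x \<in> {0..h}" using x by blast
    then have "(y has_real_derivative \<phi> (h * x)) (at (h * x) within {0..h})"
      using deriv by blast
    then have "(y has_real_derivative \<phi> (h * x)) (at (h * x) within (\<lambda>x. h * x) ` {a..b})"
      using img by (rule DERIV_subset)
    moreover have "((\<lambda>x. h * x) has_real_derivative h) (at x within {a..b})"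
      by (rule derivative_eq_intros refl | simp)+
    ultimately show ?thesis
      using DERIV_image_chain by (fastforce simp: o_def mult.commute)
  qed
  then show ?thesis
    using fundamental_theorem_of_calculus[OF ab(2), of "\<lambda>x. y (h * x)"]
    by (simp add: has_real_derivative_iff_has_vector_derivative mult.commute)
qed

lemma CM_bounded_rescaled_poly_approx:
  assumes smooth: "CM_bounded M \<phi> 0 h D" and h: "0 \<le> h" and M: "1 \<le> M"
  shows "\<exists>p. degree p < M \<and> (\<forall>x\<in>{0..1}. \<bar>\<phi> (h * x) - poly p x\<bar> \<le> \<bar>D\<bar> / fact M * h ^ M)"
proof -
  obtain Ds where Ds0: "\<forall>t\<in>{0..h}. Ds 0 t = \<phi> t"
    and Ds_deriv: "\<forall>k<M. \<forall>t\<in>{0..h}. (Ds k has_real_derivative Ds (Suc k) t) (at t within {0..h})"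
    and Ds_bound: "\<forall>t\<in>{0..h}. \<bar>Ds M t\<bar> \<le> D"
    using smooth unfolding CM_bounded_def by blast
  obtain c where c: "\<forall>t\<in>{0..h}. \<bar>Ds 0 t - (\<Sum>i<M. c i * t ^ i)\<bar> \<le> D * t ^ M / fact M"
    using taylor_poly_approx[OF Ds_deriv Ds_bound] by blast
  define p where "p = (\<Sum>i<M. monom (c i * h ^ i) i)"
  have "degree p < M"
    unfolding p_def using M
    by (intro degree_sum_less order.strict_trans1[OF degree_monom_le]) auto
  moreover have "\<bar>\<phi> (h * x) - poly p x\<bar> \<le> \<bar>D\<bar> / fact M * h ^ M" if x: "x \<in> {0..1}" for x
  proof -
    have hx: "h * x \<in> {0..h}" using x h by (auto intro: mult_left_le)
    have "poly p x = (\<Sum>i<M. c i * (h * x) ^ i)"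
      unfolding p_def poly_sum poly_monom by (simp add: power_mult_distrib mult.assoc)
    then have "\<bar>\<phi> (h * x) - poly p x\<bar> \<le> D * (h * x) ^ M / fact M"
      using c hx Ds0 by auto
    also have "\<dots> \<le> \<bar>D\<bar> * h ^ M / fact M"
      using hx by (intro divide_right_mono mult_mono power_mono) auto
    finally show ?thesis by simp
  qed
  ultimately show ?thesis by blast
qed

lemma local_quadrature_error:
  assumes nodes: "valid_nodes M xi" and n: "n \<in> {1..numN M xi}" and h: "0 < h"
    and deriv: "\<forall>t\<in>{0..h}. (y has_real_derivative \<phi> t) (at t within {0..h})"
    and smooth: "CM_bounded M \<phi> 0 h D"
  shows "\<bar>y (xiR M xi n * h) - y (xiR M xi (n - 1) * h) - h * (\<Sum>m=1..M. qw M xi n m * \<phi> (xi m * h))\<bar>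
           \<le> \<bar>D\<bar> / fact M * (1 + lebesgue_bound M xi) * h ^ (M + 1)"
proof -
  define a b where "a = xiR M xi (n - 1)" and "b = xiR M xi n"
  have ab: "0 \<le> a" "a \<le> b" "b \<le> 1" using xiR_subinterval[OF nodes n] by (auto simp: a_def b_def)
  obtain p where deg: "degree p < M"
    and approx: "\<forall>x\<in>{0..1}. \<bar>\<phi> (h * x) - poly p x\<bar> \<le> \<bar>D\<bar> / fact M * h ^ M"
    using CM_bounded_rescaled_poly_approx[OF smooth _ valid_nodesD(1)[OF nodes]] h by auto
  have interp: "\<bar>\<phi> (h * x) - (\<Sum>m=1..M. lagr M xi m x * \<phi> (h * xi m))\<bar>
      \<le> \<bar>D\<bar> / fact M * h ^ M * (1 + lebesgue_bound M xi)" if "x \<in> {a..b}" for x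
    using lagr_interpolation_error[OF nodes deg approx] that ab by auto
  have "((\<lambda>x. h * \<phi> (h * x) - h * (\<Sum>m=1..M. lagr M xi m x * \<phi> (xi m * h))) has_integral
      y (b * h) - y (a * h) - h * (\<Sum>m=1..M. qw M xi n m * \<phi> (xi m * h))) {a..b}"
    unfolding a_def b_def
    by (intro has_integral_diff has_integral_rescaled_derivative has_integral_mult_right
        has_integral_sum has_integral_mult_left has_integral_lagr)
      (use h deriv ab[unfolded a_def b_def] in auto)
  then show ?thesis
    unfolding a_def[symmetric] b_def[symmetric]
  proof (rule has_integral_bound_subinterval_unit[OF _ ab])
    fix x assume "x \<in> {a..b}"
    then have "h * \<bar>\<phi> (h * x) - (\<Sum>m=1..M. lagr M xi m x * \<phi> (h * xi m))\<bar>
        \<le> h * (\<bar>D\<bar> / fact M * h ^ M * (1 + lebesgue_bound M xi))"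
      using interp h by (intro mult_left_mono) auto
    then show "\<bar>h * \<phi> (h * x) - h * (\<Sum>m=1..M. lagr M xi m x * \<phi> (xi m * h))\<bar>
        \<le> \<bar>D\<bar> / fact M * (1 + lebesgue_bound M xi) * h ^ (M + 1)"
      using h by (simp add: right_diff_distrib[symmetric] abs_mult ac_simps)
  qed
qed

lemma le_exp_mult_if_le_add_mult:
  fixes s x r :: real
  assumes s: "0 \<le> s" "s \<le> 1 / 2" and x: "0 \<le> x" and le: "x \<le> r + s * x"
  shows "x \<le> exp (2 * s) * r"
proof -
  have "1 + s * (1 - 2 * s) \<le> (1 + 2 * s) * (1 - s)" by (simp add: algebra_simps)
  also have "\<dots> \<le> exp (2 * s) * (1 - s)"
    using exp_ge_add_one_self[of "2 * s"] s by (intro mult_right_mono) auto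
  moreover have "0 \<le> s * (1 - 2 * s)" using s by simp
  ultimately have "1 \<le> exp (2 * s) * (1 - s)" by linarith
  from mult_right_mono[OF this x] have "x \<le> exp (2 * s) * ((1 - s) * x)"
    by (simp add: mult.assoc)
  also have "\<dots> \<le> exp (2 * s) * r"
    using le by (intro mult_left_mono) (auto simp: algebra_simps)
  finally show ?thesis .
qed

lemma linear_recurrence_bound:
  fixes a :: "nat \<Rightarrow> real"
  assumes q: "1 \<le> q" and \<beta>: "0 \<le> \<beta>"
    and step: "\<And>k. k \<in> {1..N} \<Longrightarrow> a k \<le> q * (a (k - 1) + \<beta>)"
  shows "n \<le> N \<Longrightarrow> a n \<le> q ^ n * a 0 + real n * q ^ n * \<beta>"
proof (induction n)
  case 0
  then show ?case by simp
next
  case (Suc n)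
  have "a (Suc n) \<le> q * (a n + \<beta>)" using step[of "Suc n"] Suc.prems by simp
  also have "\<dots> \<le> q * (q ^ n * a 0 + real n * q ^ n * \<beta> + \<beta>)"
    using Suc q by (intro mult_left_mono) auto
  also have "\<dots> = q ^ Suc n * a 0 + real n * q ^ Suc n * \<beta> + q * \<beta>"
    by (simp add: algebra_simps)
  also have "\<dots> \<le> q ^ Suc n * a 0 + real n * q ^ Suc n * \<beta> + q ^ Suc n * \<beta>"
  proof -
    have "q * 1 \<le> q * q ^ n" using q by (intro mult_left_mono one_le_power) auto
    then show ?thesis using \<beta> by (simp add: mult_right_mono)
  qed
  finally show ?case by (simp add: algebra_simps)
qed

lemma abs_weighted_sum_lipschitz_le:
  fixes f :: "real \<Rightarrow> real"
  assumes lip: "\<forall>a b. \<bar>f a - f b\<bar> \<le> L * \<bar>a - b\<bar>" and L: "0 \<le> L"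
    and close: "\<forall>m\<in>I. \<bar>u m - v m\<bar> \<le> \<epsilon>"
  shows "\<bar>\<Sum>m\<in>I. w m * (f (u m) - f (v m))\<bar> \<le> (\<Sum>m\<in>I. \<bar>w m\<bar>) * (L * \<epsilon>)"
  unfolding sum_distrib_right
proof (rule order.trans[OF sum_abs], rule sum_mono)
  fix m assume m: "m \<in> I"
  have "\<bar>f (u m) - f (v m)\<bar> \<le> L * \<bar>u m - v m\<bar>" using lip by blast
  also have "\<dots> \<le> L * \<epsilon>" using close m L by (simp add: mult_left_mono)
  finally show "\<bar>w m * (f (u m) - f (v m))\<bar> \<le> \<bar>w m\<bar> * (L * \<epsilon>)"
    by (simp add: abs_mult mult_left_mono)
qed

text \<open>\<open>x\<^sub>1\<close> is the new iterate, \<open>g\<close> and \<open>u\<close> the previous one, \<open>Y\<^sub>0, Y\<^sub>1, v\<close> exact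
  values and \<open>\<tau>\<close> the local quadrature error.\<close>
lemma implicit_step_error:
  fixes f :: "real \<Rightarrow> real" and I :: "'i set"
  assumes lip: "\<forall>a b. \<bar>f a - f b\<bar> \<le> L * \<bar>a - b\<bar>"
    and sweep: "x\<^sub>1 = x\<^sub>0 + c * (f x\<^sub>1 - f g) + h * (\<Sum>m\<in>I. w m * f (u m))"
    and exact: "Y\<^sub>1 = Y\<^sub>0 + h * (\<Sum>m\<in>I. w m * f (v m)) + \<tau>"
    and c: "0 \<le> c" "c \<le> h" and g: "\<bar>g - Y\<^sub>1\<bar> \<le> \<epsilon>"
    and u: "\<forall>m\<in>I. \<bar>u m - v m\<bar> \<le> \<epsilon>" and w: "(\<Sum>m\<in>I. \<bar>w m\<bar>) \<le> \<Lambda>"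
  shows "\<bar>x\<^sub>1 - Y\<^sub>1\<bar> \<le> \<bar>x\<^sub>0 - Y\<^sub>0\<bar> + h * L * \<bar>x\<^sub>1 - Y\<^sub>1\<bar> + h * L * (1 + \<Lambda>) * \<epsilon> + \<bar>\<tau>\<bar>"
proof -
  have L: "0 \<le> L" using order.trans[OF abs_ge_zero lip[rule_format, of 1 0]] by simp
  have \<epsilon>: "0 \<le> \<epsilon>" using order.trans[OF abs_ge_zero g] .
  have "\<bar>x\<^sub>1 - g\<bar> \<le> \<bar>x\<^sub>1 - Y\<^sub>1\<bar> + \<epsilon>" using g by linarith
  then have "\<bar>f x\<^sub>1 - f g\<bar> \<le> L * (\<bar>x\<^sub>1 - Y\<^sub>1\<bar> + \<epsilon>)"
    using lip L by (meson mult_left_mono order.trans)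
  from mult_mono[OF c(2) this] have implicit:
    "\<bar>c * (f x\<^sub>1 - f g)\<bar> \<le> h * (L * (\<bar>x\<^sub>1 - Y\<^sub>1\<bar> + \<epsilon>))"
    using c by (simp add: abs_mult)
  have "\<bar>\<Sum>m\<in>I. w m * (f (u m) - f (v m))\<bar> \<le> (\<Sum>m\<in>I. \<bar>w m\<bar>) * (L * \<epsilon>)"
    by (rule abs_weighted_sum_lipschitz_le[OF lip L u])
  also have "\<dots> \<le> \<Lambda> * (L * \<epsilon>)" using w L \<epsilon> by (simp add: mult_right_mono)
  finally have explicit: "\<bar>h * (\<Sum>m\<in>I. w m * (f (u m) - f (v m)))\<bar> \<le> h * (\<Lambda> * (L * \<epsilon>))"
    using c by (simp add: abs_mult mult_left_mono)
  have "\<bar>x\<^sub>1 - Y\<^sub>1\<bar>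
      = \<bar>(x\<^sub>0 - Y\<^sub>0) + c * (f x\<^sub>1 - f g) + h * (\<Sum>m\<in>I. w m * (f (u m) - f (v m))) - \<tau>\<bar>"
    using sweep exact by (simp add: algebra_simps sum_subtractf)
  also have "\<dots> \<le> \<bar>x\<^sub>0 - Y\<^sub>0\<bar> + \<bar>c * (f x\<^sub>1 - f g)\<bar>
      + \<bar>h * (\<Sum>m\<in>I. w m * (f (u m) - f (v m)))\<bar> + \<bar>\<tau>\<bar>"
    by arith
  also have "\<dots> \<le> \<bar>x\<^sub>0 - Y\<^sub>0\<bar> + h * (L * (\<bar>x\<^sub>1 - Y\<^sub>1\<bar> + \<epsilon>)) + h * (\<Lambda> * (L * \<epsilon>)) + \<bar>\<tau>\<bar>"
    using implicit explicit by linarith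
  finally show ?thesis by (simp add: algebra_simps)
qed

lemma sdc_step_error:
  fixes f y :: "real \<Rightarrow> real" and u g new :: "nat \<Rightarrow> real"
  assumes nodes: "valid_nodes M xi" and h: "0 < h" and hL: "h * L \<le> 1 / 2"
    and lip: "\<forall>a b. \<bar>f a - f b\<bar> \<le> L * \<bar>a - b\<bar>"
    and deriv: "\<forall>t\<in>{0..h}. (y has_real_derivative f (y t)) (at t within {0..h})"
    and smooth: "CM_bounded M (\<lambda>t. f (y t)) 0 h D"
    and k: "k \<in> {1..numN M xi}"
    and sweep: "new k = new (k - 1)
          + (xiR M xi k - xiR M xi (k - 1)) * h * (f (new k) - f (g k))
          + h * (\<Sum>m=1..M. qw M xi k m * f (u m))"
    and u_err: "\<forall>m\<in>{1..M}. \<bar>u m - y (xi m * h)\<bar> \<le> \<epsilon>"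
    and g_err: "\<bar>g k - y (xiR M xi k * h)\<bar> \<le> \<epsilon>"
  shows "\<bar>new k - y (xiR M xi k * h)\<bar>
    \<le> exp (2 * (h * L)) * (\<bar>new (k - 1) - y (xiR M xi (k - 1) * h)\<bar>
      + (1 + lebesgue_bound M xi) * (L * h * \<epsilon> + \<bar>D\<bar> / fact M * h ^ (M + 1)))"
proof -
  define \<Lambda> where "\<Lambda> = lebesgue_bound M xi"
  define \<tau> where "\<tau> = y (xiR M xi k * h) - y (xiR M xi (k - 1) * h)
      - h * (\<Sum>m=1..M. qw M xi k m * f (y (xi m * h)))"
  have L: "0 \<le> L" using order.trans[OF abs_ge_zero lip[rule_format, of 1 0]] by simp
  have "\<bar>new k - y (xiR M xi k * h)\<bar> \<le> \<bar>new (k - 1) - y (xiR M xi (k - 1) * h)\<bar>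
      + h * L * \<bar>new k - y (xiR M xi k * h)\<bar> + h * L * (1 + \<Lambda>) * \<epsilon> + \<bar>\<tau>\<bar>"
    unfolding \<Lambda>_def
  proof (rule implicit_step_error[OF lip sweep _ _ _ g_err u_err])
    show "0 \<le> (xiR M xi k - xiR M xi (k - 1)) * h" "(xiR M xi k - xiR M xi (k - 1)) * h \<le> h"
      using xiR_subinterval[OF nodes k] h by (auto intro: mult_left_le_one_le)
  qed (use sum_abs_qw_le[OF nodes k] in \<open>simp_all add: \<tau>_def\<close>)
  moreover have "\<bar>\<tau>\<bar> \<le> \<bar>D\<bar> / fact M * (1 + \<Lambda>) * h ^ (M + 1)"
    unfolding \<tau>_def \<Lambda>_def by (rule local_quadrature_error[OF nodes k h deriv smooth])
  ultimately show ?thesis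
    unfolding \<Lambda>_def[symmetric] using h L hL
    by (intro le_exp_mult_if_le_add_mult) (auto simp: algebra_simps)
qed

lemma sdc_sweep_error:
  fixes f y :: "real \<Rightarrow> real" and u g new :: "nat \<Rightarrow> real"
  assumes nodes: "valid_nodes M xi" and h: "0 < h" and hL: "h * L \<le> 1 / 2"
    and lip: "\<forall>a b. \<bar>f a - f b\<bar> \<le> L * \<bar>a - b\<bar>"
    and deriv: "\<forall>t\<in>{0..h}. (y has_real_derivative f (y t)) (at t within {0..h})"
    and smooth: "CM_bounded M (\<lambda>t. f (y t)) 0 h D"
    and sweep: "\<forall>n\<in>{1..numN M xi}.
        new n = new (n - 1)
          + (xiR M xi n - xiR M xi (n - 1)) * h * (f (new n) - f (g n))
          + h * (\<Sum>m=1..M. qw M xi n m * f (u m))"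
    and u_err: "\<forall>m\<in>{1..M}. \<bar>u m - y (xi m * h)\<bar> \<le> \<epsilon>"
    and g_err: "\<forall>n\<in>{1..numN M xi}. \<bar>g n - y (xiR M xi n * h)\<bar> \<le> \<epsilon>"
    and n: "n \<in> {1..numN M xi}"
  shows "\<bar>new n - y (xiR M xi n * h)\<bar>
    \<le> exp (2 * real (numN M xi) * h * L) * \<bar>new 0 - y 0\<bar>
      + real (numN M xi) * exp (real (numN M xi)) * (1 + lebesgue_bound M xi)
        * (L * h * \<epsilon> + \<bar>D\<bar> / fact M * h ^ (M + 1))"
proof -
  define N where "N = numN M xi"
  define e where "e k = \<bar>new k - y (xiR M xi k * h)\<bar>" for k
  define \<beta> where "\<beta> = (1 + lebesgue_bound M xi) * (L * h * \<epsilon> + \<bar>D\<bar> / fact M * h ^ (M + 1))"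
  have L: "0 \<le> L" using order.trans[OF abs_ge_zero lip[rule_format, of 1 0]] by simp
  have "0 \<le> \<epsilon>" using order.trans[OF abs_ge_zero] u_err valid_nodesD(1)[OF nodes] by force
  then have \<beta>: "0 \<le> \<beta>" unfolding \<beta>_def using h L lebesgue_bound_nonneg[of M xi] by simp
  have "e n \<le> exp (2 * (h * L)) ^ n * e 0 + real n * exp (2 * (h * L)) ^ n * \<beta>"
  proof (rule linear_recurrence_bound[where N = N, OF _ \<beta>])
    fix k assume "k \<in> {1..N}"
    then show "e k \<le> exp (2 * (h * L)) * (e (k - 1) + \<beta>)"
      unfolding e_def \<beta>_def N_def using sweep g_err
      by (intro sdc_step_error[OF nodes h hL lip deriv smooth _ _ u_err]) auto
  qed (use h L n in \<open>auto simp: N_def\<close>)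
  also have "\<dots> \<le> exp (2 * real N * h * L) * e 0 + real N * exp (real N) * \<beta>"
  proof -
    have "real n * (2 * (h * L)) \<le> real N * (2 * (h * L))"
      using n h L by (intro mult_right_mono) (auto simp: N_def)
    then have growth: "exp (2 * (h * L)) ^ n \<le> exp (2 * real N * h * L)"
      unfolding exp_of_nat_mult[symmetric] by (simp add: mult_ac)
    moreover have "exp (2 * real N * h * L) \<le> exp (real N)"
      using hL mult_left_mono[OF hL, of "2 * real N"] by (simp add: mult_ac)
    ultimately have "exp (2 * (h * L)) ^ n \<le> exp (real N)" by (rule order.trans)
    then have "real n * exp (2 * (h * L)) ^ n \<le> real N * exp (real N)"
      using n by (intro mult_mono) (auto simp: N_def)
    then show ?thesis
      using growth \<beta> unfolding e_def by (intro add_mono mult_right_mono) auto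
  qed
  finally show ?thesis by (simp add: e_def N_def \<beta>_def xiR_0 mult.assoc)
qed

lemma mult_le_half_if_less_divide:
  fixes h L :: real
  assumes h: "0 < h" and hL: "h < 1 / (2 * L)"
  shows "h * L \<le> 1 / 2"
proof -
  have "0 < L"
  proof (rule ccontr)
    assume "\<not> 0 < L"
    then have "1 / (2 * L) \<le> 0" by (simp add: divide_nonneg_nonpos)
    then show False using h hL by linarith
  qed
  then show ?thesis using hL by (simp add: field_simps)
qed

theorem corollary2:
  fixes M :: nat and xi :: "nat \<Rightarrow> real" and L D :: real
  assumes nodes: "valid_nodes M xi"
  shows "\<exists>C1 C2 :: real. \<forall>(h::real) (f::real \<Rightarrow> real) (y::real \<Rightarrow> real) (y0::real) (eta0::real)
      (u::nat \<Rightarrow> real) (g::nat \<Rightarrow> real) (new::nat \<Rightarrow> real).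
    h > 0 \<longrightarrow>
    (\<forall>a b. \<bar>f a - f b\<bar> \<le> L * \<bar>a - b\<bar>) \<longrightarrow>
    y 0 = y0 \<longrightarrow>
    (\<forall>t\<in>{0..h}. (y has_real_derivative f (y t)) (at t within {0..h})) \<longrightarrow>
    CM_bounded M (\<lambda>t. f (y t)) 0 h D \<longrightarrow>
    h < 1 / (2 * L) \<longrightarrow>
    (\<forall>n\<in>{1..numN M xi}. \<forall>m\<in>{1..M}. xiR M xi n = xi m \<longrightarrow> g n = u m) \<longrightarrow>
    new 0 = eta0 \<longrightarrow>
    (\<forall>n\<in>{1..numN M xi}.
        new n = new (n - 1)
          + (xiR M xi n - xiR M xi (n - 1)) * h * (f (new n) - f (g n))
          + h * (\<Sum>m=1..M. qw M xi n m * f (u m))) \<longrightarrow>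
    (\<forall>n\<in>{1..numN M xi}.
        \<bar>new n - y (xiR M xi n * h)\<bar>
          \<le> exp (2 * real (numN M xi) * h * L) * \<bar>eta0 - y0\<bar>
            + C1 * h * max (Max ((\<lambda>m. \<bar>u m - y (xi m * h)\<bar>) ` {1..M}))
                           (Max ((\<lambda>n. \<bar>g n - y (xiR M xi n * h)\<bar>) ` {1..numN M xi}))
            + C2 * h ^ (M + 1))"
proof -
  define K where "K = real (numN M xi) * exp (real (numN M xi)) * (1 + lebesgue_bound M xi)"
  show ?thesis
  proof (rule exI[of _ "K * L"], rule exI[of _ "K * (\<bar>D\<bar> / fact M)"], intro allI impI ballI)
    fix h f y y0 eta0 u g new n
    assume h: "h > 0" and lip: "\<forall>a b. \<bar>f a - f b\<bar> \<le> L * \<bar>a - b\<bar>" and "y 0 = y0"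
      and deriv: "\<forall>t\<in>{0..h}. (y has_real_derivative f (y t)) (at t within {0..h})"
      and smooth: "CM_bounded M (\<lambda>t. f (y t)) 0 h D" and hL: "h < 1 / (2 * L)"
      and "new 0 = eta0"
      and sweep: "\<forall>n\<in>{1..numN M xi}.
        new n = new (n - 1)
          + (xiR M xi n - xiR M xi (n - 1)) * h * (f (new n) - f (g n))
          + h * (\<Sum>m=1..M. qw M xi n m * f (u m))"
      and n: "n \<in> {1..numN M xi}"
    let ?\<epsilon> = "max (Max ((\<lambda>m. \<bar>u m - y (xi m * h)\<bar>) ` {1..M}))
                    (Max ((\<lambda>n. \<bar>g n - y (xiR M xi n * h)\<bar>) ` {1..numN M xi}))"
    have "h * L \<le> 1 / 2" using h hL by (rule mult_le_half_if_less_divide)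
    moreover have "\<forall>m\<in>{1..M}. \<bar>u m - y (xi m * h)\<bar> \<le> ?\<epsilon>"
      "\<forall>n\<in>{1..numN M xi}. \<bar>g n - y (xiR M xi n * h)\<bar> \<le> ?\<epsilon>"
      by (auto intro: max.coboundedI1 max.coboundedI2 Max_ge)
    ultimately have "\<bar>new n - y (xiR M xi n * h)\<bar> \<le> exp (2 * real (numN M xi) * h * L) * \<bar>new 0 - y 0\<bar>
        + K * (L * h * ?\<epsilon> + \<bar>D\<bar> / fact M * h ^ (M + 1))"
      unfolding K_def by (intro sdc_sweep_error[OF nodes h _ lip deriv smooth sweep _ _ n])
    then show "\<bar>new n - y (xiR M xi n * h)\<bar> \<le> exp (2 * real (numN M xi) * h * L) * \<bar>eta0 - y0\<bar>
        + K * L * h * ?\<epsilon> + K * (\<bar>D\<bar> / fact M) * h ^ (M + 1)"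
      using \<open>y 0 = y0\<close> \<open>new 0 = eta0\<close> by (simp add: distrib_left mult.assoc)
  qed
qed

end
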